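(* Let $R$ be a commutative Noetherian ring of prime characteristic $p$ and $G$ an $x$-torsion-free left $R[x,f]$-module. Let $N:=\operatorname{ann}_G(\mathfrak{b}R[x,f])$ be a non-zero special annihilator submodule of $G$, where $\mathfrak{b}\in\mathcal{I}(G)$ satisfies $\operatorname{grann}_{R[x,f]}N=\mathfrak{b}R[x,f]$, and let $\mathfrak{b}=\mathfrak{p}_1\cap\dots\cap\mathfrak{p}_t$ be the minimal primary decomposition of the radical ideal $\mathfrak{b}$. Suppose $t>1$ and $\{1,\dots,t\}=U\cup V$ with $U,V$ non-empty and disjoint; set $\mathfrak{a}=\bigcap_{i\in U}\mathfrak{p}_i$, $\mathfrak{c}=\bigcap_{i\in V}\mathfrak{p}_i$ and $L:=\operatorname{ann}_G(\mathfrak{a}R[x,f])$. Then (i) $0\subsetneq L\subsetneq N$; (ii) $N/L=\operatorname{ann}_{G/L}(\mathfrak{c}R[x,f])$, and $\operatorname{grann}_{R[x,f]}(N/L)=\mathfrak{c}R[x,f]$ (so $\mathfrak{c}\in\mathcal{I}(G/L)$ corresponds to $N/L$); (iii) $\operatorname{grann}_{R[x,f]}L=\mathfrak{a}R[x,f]$, so $\mathfrak{a}\in\mathcal{I}(G)$ corresponds to $L$.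
   Context: $R[x,f]$ is the Frobenius skew polynomial ring: free left $R$-module on $(x^i)_{i\ge0}$, $xr=r^px$. For an ideal $\mathfrak{a}$ of $R$, $\mathfrak{a}R[x,f]=\bigoplus_{n\ge0}\mathfrak{a}x^n$. $x$-torsion-free: $xg=0\Rightarrow g=0$. $\operatorname{ann}_M\mathfrak{B}$ is the set of elements of $M$ killed by $\mathfrak{B}$; special annihilator submodules are $\operatorname{ann}_M\mathfrak{B}$ for graded two-sided ideals $\mathfrak{B}$. $\operatorname{grann}N$ is the set of $\sum r_ix^i$ with each $r_ix^i$ annihilating $N$. For $x$-torsion-free $G$, $\mathcal{I}(G)$ is the set of ideals $\mathfrak{b}$ with $\operatorname{grann}N=\mathfrak{b}R[x,f]$ for some $R[x,f]$-submodule $N$ of $G$ (these ideals are radical). For a special annihilator submodule $L$ of $G$, $G/L$ is $x$-torsion-free. *)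

theory Defs
  imports "HOL-Algebra.Algebra"
begin

text \<open>A left module over the Frobenius skew polynomial ring R[x,f] is an R-module M
together with an additive map F (the action of x) with F (r m) = r^p F m.\<close>

definition frob_skew_module ::
  "('a, 'c) ring_scheme \<Rightarrow> ('a, 'b, 'd) module_scheme \<Rightarrow> nat \<Rightarrow> ('b \<Rightarrow> 'b) \<Rightarrow> bool" where
  "frob_skew_module R M p F \<longleftrightarrow>
     module R M \<and>
     (\<forall>g \<in> carrier M. F g \<in> carrier M) \<and>
     (\<forall>g \<in> carrier M. \<forall>h \<in> carrier M. F (g \<oplus>\<^bsub>M\<^esub> h) = F g \<oplus>\<^bsub>M\<^esub> F h) \<and>
     (\<forall>r \<in> carrier R. \<forall>g \<in> carrier M. F (r \<odot>\<^bsub>M\<^esub> g) = (r [^]\<^bsub>R\<^esub> p) \<odot>\<^bsub>M\<^esub> F g)"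

definition char_prime :: "('a, 'c) ring_scheme \<Rightarrow> nat \<Rightarrow> bool" where
  "char_prime R p \<longleftrightarrow> Factorial_Ring.prime p \<and> [p] \<cdot>\<^bsub>R\<^esub> \<one>\<^bsub>R\<^esub> = \<zero>\<^bsub>R\<^esub>"

definition x_torsion_free :: "('a, 'b, 'd) module_scheme \<Rightarrow> ('b \<Rightarrow> 'b) \<Rightarrow> bool" where
  "x_torsion_free M F \<longleftrightarrow> (\<forall>g \<in> carrier M. F g = \<zero>\<^bsub>M\<^esub> \<longrightarrow> g = \<zero>\<^bsub>M\<^esub>)"

text \<open>ann_M(b R[x,f]), relative to a submodule L (i.e. computed in M/L, pulled back to M).
  With L = {0} this is ann_M(b R[x,f]).\<close>
definition ann_rel ::
  "('a, 'b, 'd) module_scheme \<Rightarrow> ('b \<Rightarrow> 'b) \<Rightarrow> 'b set \<Rightarrow> 'a set \<Rightarrow> 'b set" where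
  "ann_rel M F L b = {g \<in> carrier M. \<forall>r \<in> b. \<forall>n::nat. r \<odot>\<^bsub>M\<^esub> (F ^^ n) g \<in> L}"

abbreviation ann_ext ::
  "('a, 'b, 'd) module_scheme \<Rightarrow> ('b \<Rightarrow> 'b) \<Rightarrow> 'a set \<Rightarrow> 'b set" where
  "ann_ext M F b \<equiv> ann_rel M F {\<zero>\<^bsub>M\<^esub>} b"

text \<open>Graded annihilator: grann N = \<Oplus>_n c_n x^n is represented by the sequence of its
  homogeneous components c_n = {r. r x^n N = 0}.  The ideal b R[x,f] = \<Oplus>_n b x^n is
  represented by the constant sequence (\<lambda>n. b).  The relative version computes grann of N/L
  inside M/L.\<close>
definition grann_rel ::
  "('a, 'c) ring_scheme \<Rightarrow> ('a, 'b, 'd) module_scheme \<Rightarrow> ('b \<Rightarrow> 'b) \<Rightarrow> 'b set \<Rightarrow> 'b set \<Rightarrow> nat \<Rightarrow> 'a set" where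
  "grann_rel R M F L N n = {r \<in> carrier R. \<forall>g \<in> N. r \<odot>\<^bsub>M\<^esub> (F ^^ n) g \<in> L}"

abbreviation grann ::
  "('a, 'c) ring_scheme \<Rightarrow> ('a, 'b, 'd) module_scheme \<Rightarrow> ('b \<Rightarrow> 'b) \<Rightarrow> 'b set \<Rightarrow> nat \<Rightarrow> 'a set" where
  "grann R M F N \<equiv> grann_rel R M F {\<zero>\<^bsub>M\<^esub>} N"

definition ext_ideal :: "'a set \<Rightarrow> nat \<Rightarrow> 'a set" where
  "ext_ideal b = (\<lambda>n. b)"

definition minimal_prime_decomp ::
  "('a, 'c) ring_scheme \<Rightarrow> 'a set \<Rightarrow> (nat \<Rightarrow> 'a set) \<Rightarrow> nat \<Rightarrow> bool" where
  "minimal_prime_decomp R b P t \<longleftrightarrow>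
     (\<forall>i \<in> {1..t}. primeideal (P i) R) \<and>
     b = (\<Inter>i \<in> {1..t}. P i) \<and>
     (\<forall>i \<in> {1..t}. \<forall>j \<in> {1..t}. i \<noteq> j \<longrightarrow> P i \<noteq> P j) \<and>
     (\<forall>i \<in> {1..t}. (\<Inter>j \<in> {1..t} - {i}. P j) \<noteq> b)"

end

theory Submission
  imports Defs
begin

(* Write A and C for the intersections of the P i over U and over V, so that b = A \<inter> C,
   N = ann(b R[x,f]) and L = ann(A R[x,f]).  As x r = r^p x and a c^(p^m) \<in> A \<inter> C = b for
   a \<in> A, c \<in> C, every c \<in> C maps N into L.  Conversely, if s \<in> b kills x^(n+1) g modulo L,
   then s^2 x^(n+1) g = 0 because s \<in> A kills L, so x (s x^n g) = s^p x^(n+1) g = 0 (as p \<ge> 2)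
   and x-torsion-freeness gives s x^n g = 0; hence N/L is the annihilator of C R[x,f] in G/L.
   The graded annihilators are computed one prime at a time: by minimality of the decomposition
   and prime avoidance, no P i with i \<in> U contains C and no P i with i \<in> V contains A, so an
   element of C (resp. A) outside P i can be cancelled from the relations r c^(p^n) \<in> b
   (resp. a r \<in> b) provided by grann N = b R[x,f]. *)

lemma (in primeideal) nat_pow_notin:
  assumes "a \<in> carrier R" "a \<notin> I"
  shows "a [^] (k::nat) \<notin> I"
proof (induct k)
  case 0
  show ?case using I_notcarr one_imp_carrier by auto
next
  case (Suc k)
  then show ?case using I_prime[of "a [^] k" a] assms by auto
qed

lemma (in ideal) nat_pow_mem:
  assumes "a \<in> I" "0 < k"
  shows "a [^] (k::nat) \<in> I"
proof -
  obtain j where "k = Suc j" using assms(2) gr0_implies_Suc by blast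
  then show ?thesis using assms(1) I_l_closed Icarr by simp
qed

lemma (in cring) Inter_subset_primeideal:
  assumes "finite W" "W \<noteq> {}" "\<And>j. j \<in> W \<Longrightarrow> ideal (I j) R"
    and "primeideal P R" "(\<Inter>j\<in>W. I j) \<subseteq> P"
  shows "\<exists>j\<in>W. I j \<subseteq> P"
  using assms(1-3,5)
proof (induct W rule: finite_ne_induct)
  case (singleton j)
  then show ?case by simp
next
  case (insert w W)
  have "ideal (\<Inter>j\<in>W. I j) R"
    using insert by (intro i_Intersect) auto
  moreover have "I w \<cdot> (\<Inter>j\<in>W. I j) \<subseteq> P"
    using ideal_prod_inter[OF insert(5)[of w] calculation] insert(6) by auto
  ultimately have "I w \<subseteq> P \<or> (\<Inter>j\<in>W. I j) \<subseteq> P"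
    using primeideal_divides_ideal_prod[OF assms(4)] insert(5) by blast
  then show ?case using insert(4,5) by auto
qed

lemma ideal_INT_primeideal:
  assumes "W \<noteq> {}" "\<And>i. i \<in> W \<Longrightarrow> primeideal (P i) R"
  shows "ideal (\<Inter>i\<in>W. P i) R"
proof -
  obtain i where "i \<in> W" using assms(1) by blast
  then interpret cring R using assms(2) primeideal.axioms(2) by blast
  show ?thesis using assms primeideal.axioms(1) by (intro i_Intersect) auto
qed

lemma minimal_prime_decomp_Inter_not_subset:
  assumes decomp: "minimal_prime_decomp R b P t"
    and W: "W \<subseteq> {1..t}" "W \<noteq> {}" and i: "i \<in> {1..t} - W"
  shows "\<not> (\<Inter>j\<in>W. P j) \<subseteq> P i"
proof
  assume sub: "(\<Inter>j\<in>W. P j) \<subseteq> P i"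
  have prime: "\<And>j. j \<in> {1..t} \<Longrightarrow> primeideal (P j) R"
    and b: "b = (\<Inter>j\<in>{1..t}. P j)"
    and minimal: "(\<Inter>j\<in>{1..t} - {i}. P j) \<noteq> b"
    using decomp i unfolding minimal_prime_decomp_def by auto
  have Pi: "primeideal (P i) R" using prime i by blast
  have "\<exists>j\<in>W. P j \<subseteq> P i"
  proof (rule cring.Inter_subset_primeideal[OF primeideal.axioms(2)[OF Pi] _ W(2) _ Pi sub])
    show "finite W" using W(1) finite_subset by blast
    show "\<And>j. j \<in> W \<Longrightarrow> ideal (P j) R" using W(1) prime primeideal.axioms(1) by blast
  qed
  then obtain j where j: "j \<in> W" "P j \<subseteq> P i" by blast
  have "j \<in> {1..t} - {i}" using j(1) W(1) i by blast
  then have "(\<Inter>k\<in>{1..t} - {i}. P k) \<subseteq> P i" using j(2) by blast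
  then have "(\<Inter>k\<in>{1..t} - {i}. P k) = b" unfolding b by (auto intro: INT_I)
  then show False using minimal by blast
qed

lemma minimal_prime_decomp_partition:
  assumes decomp: "minimal_prime_decomp R b P t"
    and "U \<union> V = {1..t}" "U \<inter> V = {}" "U \<noteq> {}" "V \<noteq> {}"
  shows "b = (\<Inter>i\<in>U. P i) \<inter> (\<Inter>i\<in>V. P i)"
    and "\<And>i. i \<in> U \<Longrightarrow> primeideal (P i) R"
    and "ideal (\<Inter>i\<in>U. P i) R"
    and "(\<Inter>i\<in>U. P i) \<noteq> carrier R"
    and "\<And>i. i \<in> U \<Longrightarrow> \<not> (\<Inter>j\<in>V. P j) \<subseteq> P i"
    and "\<not> (\<Inter>j\<in>V. P j) \<subseteq> (\<Inter>i\<in>U. P i)"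
proof -
  have b: "b = (\<Inter>i\<in>U \<union> V. P i)" and prime: "\<And>i. i \<in> U \<union> V \<Longrightarrow> primeideal (P i) R"
    using decomp assms(2) unfolding minimal_prime_decomp_def by simp_all
  then show "b = (\<Inter>i\<in>U. P i) \<inter> (\<Inter>i\<in>V. P i)" by (simp add: INT_Un)
  show prime_U: "\<And>i. i \<in> U \<Longrightarrow> primeideal (P i) R" using prime by blast
  show "ideal (\<Inter>i\<in>U. P i) R" by (rule ideal_INT_primeideal[OF assms(4) prime_U])
  obtain i where i: "i \<in> U" using assms(4) by blast
  then interpret P\<^sub>i: primeideal "P i" R by (rule prime_U)
  have "\<one>\<^bsub>R\<^esub> \<notin> P i" using P\<^sub>i.I_notcarr P\<^sub>i.one_imp_carrier by blast
  then show "(\<Inter>i\<in>U. P i) \<noteq> carrier R" using i by blast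
  show avoid: "\<not> (\<Inter>j\<in>V. P j) \<subseteq> P i" if "i \<in> U" for i
  proof (rule minimal_prime_decomp_Inter_not_subset[OF decomp _ assms(5)])
    show "V \<subseteq> {1..t}" "i \<in> {1..t} - V" using assms(2,3) that by auto
  qed
  show "\<not> (\<Inter>j\<in>V. P j) \<subseteq> (\<Inter>i\<in>U. P i)" using avoid[OF i] i by blast
qed

lemma ann_rel_antimono: "A \<subseteq> B \<Longrightarrow> ann_rel M F L B \<subseteq> ann_rel M F L A"
  unfolding ann_rel_def by blast

context
  fixes R :: "('a, 'c) ring_scheme" and M :: "('a, 'b, 'd) module_scheme"
    and p :: nat and F :: "'b \<Rightarrow> 'b"
  assumes frob: "frob_skew_module R M p F"
begin

interpretation module R M
  using frob by (simp add: frob_skew_module_def)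

lemma frob_closed: "g \<in> carrier M \<Longrightarrow> F g \<in> carrier M"
  and frob_add: "g \<in> carrier M \<Longrightarrow> h \<in> carrier M \<Longrightarrow> F (g \<oplus>\<^bsub>M\<^esub> h) = F g \<oplus>\<^bsub>M\<^esub> F h"
  and frob_smult: "r \<in> carrier R \<Longrightarrow> g \<in> carrier M \<Longrightarrow> F (r \<odot>\<^bsub>M\<^esub> g) = (r [^]\<^bsub>R\<^esub> p) \<odot>\<^bsub>M\<^esub> F g"
  using frob by (auto simp: frob_skew_module_def)

lemma frob_funpow_closed: "g \<in> carrier M \<Longrightarrow> (F ^^ n) g \<in> carrier M"
  by (induct n) (simp_all add: frob_closed)

lemma frob_funpow_smult:
  assumes "r \<in> carrier R" "g \<in> carrier M"
  shows "(F ^^ n) (r \<odot>\<^bsub>M\<^esub> g) = (r [^]\<^bsub>R\<^esub> (p ^ n)) \<odot>\<^bsub>M\<^esub> (F ^^ n) g"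
proof (induct n)
  case 0
  then show ?case using assms by simp
next
  case (Suc n)
  then show ?case
    using assms by (simp add: frob_smult frob_funpow_closed R.nat_pow_pow mult.commute)
qed

lemma frob_zero: "F \<zero>\<^bsub>M\<^esub> = \<zero>\<^bsub>M\<^esub>"
proof -
  have "F \<zero>\<^bsub>M\<^esub> \<oplus>\<^bsub>M\<^esub> F \<zero>\<^bsub>M\<^esub> = \<zero>\<^bsub>M\<^esub> \<oplus>\<^bsub>M\<^esub> F \<zero>\<^bsub>M\<^esub>"
    using frob_add[of "\<zero>\<^bsub>M\<^esub>" "\<zero>\<^bsub>M\<^esub>"] frob_closed by simp
  then show ?thesis using frob_closed by (simp add: M.add.right_cancel)
qed

lemma frob_funpow_zero: "(F ^^ n) \<zero>\<^bsub>M\<^esub> = \<zero>\<^bsub>M\<^esub>"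
  by (induct n) (simp_all add: frob_zero)

lemma zero_mem_ann_ext: "A \<subseteq> carrier R \<Longrightarrow> \<zero>\<^bsub>M\<^esub> \<in> ann_ext M F A"
  unfolding ann_rel_def by (auto simp: frob_funpow_zero)

lemma grann_zero: "grann R M F {\<zero>\<^bsub>M\<^esub>} n = carrier R"
  unfolding grann_rel_def by (auto simp: frob_funpow_zero)

lemma smult_mem_ann_ext:
  assumes "0 < p" "ideal A R" "ideal C R" and g: "g \<in> ann_ext M F (A \<inter> C)" and r: "r \<in> C"
  shows "r \<odot>\<^bsub>M\<^esub> (F ^^ n) g \<in> ann_ext M F A"
proof -
  have gc: "g \<in> carrier M" using g unfolding ann_rel_def by blast
  have rc: "r \<in> carrier R" using r ideal.Icarr[OF assms(3)] by blast
  have "s \<odot>\<^bsub>M\<^esub> (F ^^ m) (r \<odot>\<^bsub>M\<^esub> (F ^^ n) g) = \<zero>\<^bsub>M\<^esub>" if s: "s \<in> A" for s m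
  proof -
    have sc: "s \<in> carrier R" using s ideal.Icarr[OF assms(2)] by blast
    have "r [^]\<^bsub>R\<^esub> (p ^ m) \<in> C" using ideal.nat_pow_mem[OF assms(3) r] assms(1) by simp
    then have "s \<otimes>\<^bsub>R\<^esub> r [^]\<^bsub>R\<^esub> (p ^ m) \<in> A \<inter> C"
      using s sc rc ideal.I_r_closed[OF assms(2)] ideal.I_l_closed[OF assms(3)] by simp
    then have "(s \<otimes>\<^bsub>R\<^esub> r [^]\<^bsub>R\<^esub> (p ^ m)) \<odot>\<^bsub>M\<^esub> (F ^^ (m + n)) g = \<zero>\<^bsub>M\<^esub>"
      using g unfolding ann_rel_def by blast
    then show ?thesis
      using sc rc gc by (simp add: frob_funpow_smult frob_funpow_closed smult_assoc1 funpow_add)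
  qed
  then show ?thesis unfolding ann_rel_def using rc gc by (simp add: frob_funpow_closed)
qed

lemma subset_grann_ann_ext: "A \<subseteq> carrier R \<Longrightarrow> A \<subseteq> grann R M F (ann_ext M F A) n"
  unfolding grann_rel_def ann_rel_def by auto

lemma subset_grann_rel_ann_ext:
  assumes "0 < p" "ideal A R" "ideal C R"
  shows "C \<subseteq> grann_rel R M F (ann_ext M F A) (ann_ext M F (A \<inter> C)) n"
  unfolding grann_rel_def using smult_mem_ann_ext[OF assms] ideal.Icarr[OF assms(3)] by blast

lemma square_smult_frob_eq_zero_imp_smult_eq_zero:
  assumes "x_torsion_free M F" "2 \<le> p" "s \<in> carrier R" "g \<in> carrier M"
    and "(s \<otimes>\<^bsub>R\<^esub> s) \<odot>\<^bsub>M\<^esub> F g = \<zero>\<^bsub>M\<^esub>"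
  shows "s \<odot>\<^bsub>M\<^esub> g = \<zero>\<^bsub>M\<^esub>"
proof -
  have "s [^]\<^bsub>R\<^esub> p = s [^]\<^bsub>R\<^esub> (p - 2) \<otimes>\<^bsub>R\<^esub> s [^]\<^bsub>R\<^esub> (2::nat)"
    using R.nat_pow_mult[OF assms(3), of "p - 2" 2] assms(2) le_add_diff_inverse2 by metis
  then have "F (s \<odot>\<^bsub>M\<^esub> g) = s [^]\<^bsub>R\<^esub> (p - 2) \<odot>\<^bsub>M\<^esub> ((s \<otimes>\<^bsub>R\<^esub> s) \<odot>\<^bsub>M\<^esub> F g)"
    using assms(3,4) by (simp add: frob_smult frob_closed smult_assoc1 numeral_2_eq_2)
  then have "F (s \<odot>\<^bsub>M\<^esub> g) = \<zero>\<^bsub>M\<^esub>" using assms(3,5) by simp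
  then show ?thesis using assms(1,3,4) unfolding x_torsion_free_def by simp
qed

lemma ann_rel_ann_ext:
  assumes "x_torsion_free M F" "2 \<le> p" "ideal A R" "ideal C R"
  shows "ann_rel M F (ann_ext M F A) C = ann_ext M F (A \<inter> C)"
proof
  show "ann_ext M F (A \<inter> C) \<subseteq> ann_rel M F (ann_ext M F A) C"
  proof
    fix g assume g: "g \<in> ann_ext M F (A \<inter> C)"
    then have "g \<in> carrier M" unfolding ann_rel_def by blast
    then show "g \<in> ann_rel M F (ann_ext M F A) C"
      using smult_mem_ann_ext[OF _ assms(3,4) g] assms(2) by (subst ann_rel_def) simp
  qed
next
  show "ann_rel M F (ann_ext M F A) C \<subseteq> ann_ext M F (A \<inter> C)"
  proof
    fix g assume g: "g \<in> ann_rel M F (ann_ext M F A) C"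
    have gc: "g \<in> carrier M" using g unfolding ann_rel_def by blast
    have "s \<odot>\<^bsub>M\<^esub> (F ^^ n) g = \<zero>\<^bsub>M\<^esub>" if s: "s \<in> A \<inter> C" for s n
    proof -
      have sc: "s \<in> carrier R" using s ideal.Icarr[OF assms(3)] by blast
      have "s \<odot>\<^bsub>M\<^esub> (F ^^ Suc n) g \<in> ann_ext M F A" using g s unfolding ann_rel_def by blast
      then have "s \<odot>\<^bsub>M\<^esub> (F ^^ 0) (s \<odot>\<^bsub>M\<^esub> (F ^^ Suc n) g) = \<zero>\<^bsub>M\<^esub>"
        using s unfolding ann_rel_def by blast
      then have "(s \<otimes>\<^bsub>R\<^esub> s) \<odot>\<^bsub>M\<^esub> F ((F ^^ n) g) = \<zero>\<^bsub>M\<^esub>"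
        using sc gc by (simp add: smult_assoc1 frob_closed frob_funpow_closed)
      then show ?thesis
        using square_smult_frob_eq_zero_imp_smult_eq_zero assms(1,2) sc gc frob_funpow_closed by blast
    qed
    then show "g \<in> ann_ext M F (A \<inter> C)" unfolding ann_rel_def using gc by blast
  qed
qed

lemma grann_mult_pow_mem:
  assumes "r \<in> carrier R" "N \<subseteq> carrier M" "\<And>g. g \<in> N \<Longrightarrow> r \<odot>\<^bsub>M\<^esub> g \<in> L"
    and r': "r' \<in> grann R M F L n"
  shows "r' \<otimes>\<^bsub>R\<^esub> r [^]\<^bsub>R\<^esub> (p ^ n) \<in> grann R M F N n"
proof -
  have r'c: "r' \<in> carrier R" using r' unfolding grann_rel_def by blast
  have "(r' \<otimes>\<^bsub>R\<^esub> r [^]\<^bsub>R\<^esub> (p ^ n)) \<odot>\<^bsub>M\<^esub> (F ^^ n) g = \<zero>\<^bsub>M\<^esub>" if g: "g \<in> N" for g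
  proof -
    have "r' \<odot>\<^bsub>M\<^esub> (F ^^ n) (r \<odot>\<^bsub>M\<^esub> g) = \<zero>\<^bsub>M\<^esub>"
      using r' assms(3)[OF g] unfolding grann_rel_def by blast
    then show ?thesis
      using g assms(1,2) r'c by (auto simp: frob_funpow_smult frob_funpow_closed smult_assoc1)
  qed
  then show ?thesis unfolding grann_rel_def using r'c assms(1) by simp
qed

lemma grann_rel_mult_mem:
  assumes "N \<subseteq> carrier M" "A \<subseteq> carrier R" "s \<in> A"
    and r: "r \<in> grann_rel R M F (ann_ext M F A) N n"
  shows "s \<otimes>\<^bsub>R\<^esub> r \<in> grann R M F N n"
proof -
  have rc: "r \<in> carrier R" using r unfolding grann_rel_def by blast
  have "(s \<otimes>\<^bsub>R\<^esub> r) \<odot>\<^bsub>M\<^esub> (F ^^ n) g = \<zero>\<^bsub>M\<^esub>" if g: "g \<in> N" for g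
  proof -
    have "s \<odot>\<^bsub>M\<^esub> (F ^^ 0) (r \<odot>\<^bsub>M\<^esub> (F ^^ n) g) = \<zero>\<^bsub>M\<^esub>"
      using r g assms(3) unfolding grann_rel_def ann_rel_def by blast
    moreover have "(F ^^ n) g \<in> carrier M" using g assms(1) frob_funpow_closed by blast
    ultimately show ?thesis using assms(2,3) rc by (auto simp: smult_assoc1)
  qed
  then show ?thesis unfolding grann_rel_def using rc assms(2,3) by auto
qed

lemma grann_ann_ext_Inter_primes:
  assumes "0 < p" "U \<noteq> {}" and prime: "\<And>i. i \<in> U \<Longrightarrow> primeideal (P i) R"
    and "ideal C R" and avoid: "\<And>i. i \<in> U \<Longrightarrow> \<not> C \<subseteq> P i"
    and grann_N: "grann R M F (ann_ext M F ((\<Inter>i\<in>U. P i) \<inter> C)) n = (\<Inter>i\<in>U. P i) \<inter> C"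
  shows "grann R M F (ann_ext M F (\<Inter>i\<in>U. P i)) n = (\<Inter>i\<in>U. P i)"
proof
  let ?A = "\<Inter>i\<in>U. P i"
  have "ideal ?A R" by (rule ideal_INT_primeideal[OF assms(2) prime])
  then show "?A \<subseteq> grann R M F (ann_ext M F ?A) n"
    by (intro subset_grann_ann_ext) (simp add: ideal.axioms(1) additive_subgroup.a_subset)
  show "grann R M F (ann_ext M F ?A) n \<subseteq> ?A"
  proof
    fix r' assume r': "r' \<in> grann R M F (ann_ext M F ?A) n"
    have r'c: "r' \<in> carrier R" using r' unfolding grann_rel_def by blast
    have "r' \<in> P i" if i: "i \<in> U" for i
    proof -
      obtain r where r: "r \<in> C" "r \<notin> P i" using avoid[OF i] by blast
      have rc: "r \<in> carrier R" using r(1) ideal.Icarr[OF assms(4)] by blast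
      have "\<And>g. g \<in> ann_ext M F (?A \<inter> C) \<Longrightarrow> r \<odot>\<^bsub>M\<^esub> g \<in> ann_ext M F ?A"
        using smult_mem_ann_ext[OF assms(1) \<open>ideal ?A R\<close> assms(4) _ r(1), where n = 0] by simp
      moreover have "ann_ext M F (?A \<inter> C) \<subseteq> carrier M" unfolding ann_rel_def by blast
      ultimately have "r' \<otimes>\<^bsub>R\<^esub> r [^]\<^bsub>R\<^esub> (p ^ n) \<in> grann R M F (ann_ext M F (?A \<inter> C)) n"
        using grann_mult_pow_mem[OF rc _ _ r'] by blast
      then have "r' \<otimes>\<^bsub>R\<^esub> r [^]\<^bsub>R\<^esub> (p ^ n) \<in> P i" using grann_N i by auto
      then show "r' \<in> P i"
        using primeideal.I_prime[OF prime[OF i]] primeideal.nat_pow_notin[OF prime[OF i] rc r(2)]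
          r'c rc by blast
    qed
    then show "r' \<in> ?A" by blast
  qed
qed

lemma grann_rel_ann_ext_Inter_primes:
  assumes "0 < p" "ideal A R" "V \<noteq> {}" and prime: "\<And>i. i \<in> V \<Longrightarrow> primeideal (P i) R"
    and avoid: "\<And>i. i \<in> V \<Longrightarrow> \<not> A \<subseteq> P i"
    and grann_N: "grann R M F (ann_ext M F (A \<inter> (\<Inter>i\<in>V. P i))) n = A \<inter> (\<Inter>i\<in>V. P i)"
  shows "grann_rel R M F (ann_ext M F A) (ann_ext M F (A \<inter> (\<Inter>i\<in>V. P i))) n = (\<Inter>i\<in>V. P i)"
proof
  let ?C = "\<Inter>i\<in>V. P i"
  have "ideal ?C R" by (rule ideal_INT_primeideal[OF assms(3) prime])
  then show "?C \<subseteq> grann_rel R M F (ann_ext M F A) (ann_ext M F (A \<inter> ?C)) n"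
    by (rule subset_grann_rel_ann_ext[OF assms(1,2)])
  show "grann_rel R M F (ann_ext M F A) (ann_ext M F (A \<inter> ?C)) n \<subseteq> ?C"
  proof
    fix r assume r: "r \<in> grann_rel R M F (ann_ext M F A) (ann_ext M F (A \<inter> ?C)) n"
    have rc: "r \<in> carrier R" using r unfolding grann_rel_def by blast
    have "r \<in> P i" if i: "i \<in> V" for i
    proof -
      obtain s where s: "s \<in> A" "s \<notin> P i" using avoid[OF i] by blast
      have sc: "s \<in> carrier R" using s(1) ideal.Icarr[OF assms(2)] by blast
      have "ann_ext M F (A \<inter> ?C) \<subseteq> carrier M" unfolding ann_rel_def by blast
      then have "s \<otimes>\<^bsub>R\<^esub> r \<in> grann R M F (ann_ext M F (A \<inter> ?C)) n"
        using grann_rel_mult_mem[OF _ _ s(1) r] ideal.Icarr[OF assms(2)] by blast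
      then have "s \<otimes>\<^bsub>R\<^esub> r \<in> P i" using grann_N i by auto
      then show "r \<in> P i" using primeideal.I_prime[OF prime[OF i] sc rc] s(2) by blast
    qed
    then show "r \<in> ?C" by blast
  qed
qed

lemma zero_psubset_ann_ext:
  assumes "ideal A R" "A \<noteq> carrier R" "grann R M F (ann_ext M F A) 0 = A"
  shows "{\<zero>\<^bsub>M\<^esub>} \<subset> ann_ext M F A"
proof -
  have "\<zero>\<^bsub>M\<^esub> \<in> ann_ext M F A"
    by (rule zero_mem_ann_ext) (use ideal.Icarr[OF assms(1)] in blast)
  moreover have "ann_ext M F A \<noteq> {\<zero>\<^bsub>M\<^esub>}"
  proof
    assume "ann_ext M F A = {\<zero>\<^bsub>M\<^esub>}"
    then have "A = carrier R" using assms(3) grann_zero[of 0] by simp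
    then show False using assms(2) by blast
  qed
  ultimately show ?thesis by blast
qed

lemma ann_ext_strict_antimono:
  assumes "B \<subset> A" "grann R M F (ann_ext M F A) 0 = A" "grann R M F (ann_ext M F B) 0 = B"
  shows "ann_ext M F A \<subset> ann_ext M F B"
proof -
  have "ann_ext M F A \<subseteq> ann_ext M F B" using assms(1) by (intro ann_rel_antimono) blast
  moreover have "ann_ext M F A \<noteq> ann_ext M F B"
  proof
    assume "ann_ext M F A = ann_ext M F B"
    then have "A = B" using assms(2,3) by metis
    then show False using assms(1) by blast
  qed
  ultimately show ?thesis by blast
qed

end

theorem theorem3p6:
  fixes R :: "('a, 'c) ring_scheme" and M :: "('a, 'b, 'd) module_scheme"
    and p :: nat and F :: "'b \<Rightarrow> 'b" and b :: "'a set" and P :: "nat \<Rightarrow> 'a set"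
    and t :: nat and U V :: "nat set"
  assumes "cring R" and "noetherian_ring R" and "char_prime R p"
    and "frob_skew_module R M p F" and "x_torsion_free M F"
    and "ann_ext M F b \<noteq> {\<zero>\<^bsub>M\<^esub>}"
    and "grann R M F (ann_ext M F b) = ext_ideal b"
    and "minimal_prime_decomp R b P t"
    and "t > 1"
    and "U \<union> V = {1..t}" and "U \<inter> V = {}" and "U \<noteq> {}" and "V \<noteq> {}"
  shows "({\<zero>\<^bsub>M\<^esub>} \<subset> ann_ext M F (\<Inter>i \<in> U. P i)
           \<and> ann_ext M F (\<Inter>i \<in> U. P i) \<subset> ann_ext M F b)
    \<and> ann_rel M F (ann_ext M F (\<Inter>i \<in> U. P i)) (\<Inter>i \<in> V. P i) = ann_ext M F b
    \<and> grann_rel R M F (ann_ext M F (\<Inter>i \<in> U. P i)) (ann_ext M F b)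
           = ext_ideal (\<Inter>i \<in> V. P i)
    \<and> grann R M F (ann_ext M F (\<Inter>i \<in> U. P i)) = ext_ideal (\<Inter>i \<in> U. P i)"
proof -
  define A where "A = (\<Inter>i \<in> U. P i)"
  define C where "C = (\<Inter>i \<in> V. P i)"
  note U = minimal_prime_decomp_partition[OF assms(8,10-13), folded A_def C_def]
  have "V \<union> U = {1..t}" "V \<inter> U = {}" using assms(10,11) by auto
  note V = minimal_prime_decomp_partition[OF assms(8) this assms(13,12), folded A_def C_def]
  have p: "2 \<le> p" using assms(3) prime_ge_2_nat unfolding char_prime_def by blast
  have grann_N: "grann R M F (ann_ext M F (A \<inter> C)) n = A \<inter> C" for n
    using assms(7) unfolding U(1) ext_ideal_def by metis
  have grann_L: "grann R M F (ann_ext M F A) n = A" for n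
    unfolding A_def
    by (rule grann_ann_ext_Inter_primes[OF assms(4) _ assms(12) U(2) V(3) U(5)])
      (use p grann_N[unfolded A_def] in auto)
  have grann_rel: "grann_rel R M F (ann_ext M F A) (ann_ext M F (A \<inter> C)) n = C" for n
    unfolding C_def
    by (rule grann_rel_ann_ext_Inter_primes[OF assms(4) _ U(3) assms(13) V(2) V(5)])
      (use p grann_N[unfolded C_def] in auto)
  have "A \<inter> C \<subset> A" using V(6) by blast
  then have "ann_ext M F A \<subset> ann_ext M F (A \<inter> C)"
    by (rule ann_ext_strict_antimono[OF assms(4) _ grann_L grann_N])
  moreover have "{\<zero>\<^bsub>M\<^esub>} \<subset> ann_ext M F A"
    by (rule zero_psubset_ann_ext[OF assms(4) U(3,4) grann_L])
  ultimately show ?thesis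
    unfolding A_def[symmetric] C_def[symmetric] U(1) ext_ideal_def
    using ann_rel_ann_ext[OF assms(4,5) p U(3) V(3)] grann_rel grann_L
    by (simp add: fun_eq_iff)
qed

end
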